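(* Let $\vec\alpha\in\mathbb{R}^{10}$ be such that $\Psi[\vec\alpha]$ is an irreducible rational function and $\alpha_1+i\alpha_2\ne0$. Then for every $r>0$ the ten maps $K_1[\vec\alpha],\dots,K_{10}[\vec\alpha]:\mathbb{R}^2\to\mathbb{R}^3$ are linearly independent over $\mathbb{R}$.
   Context: Identify $\mathbb{R}^2$ with $\mathbb{C}$, $z=x+iy$; $\mathcal S(z)=\frac{1}{1+|z|^2}(2\,\mathrm{Re}\,z,2\,\mathrm{Im}\,z,|z|^2-1)$ is the stereographic projection. For $\vec\alpha=(\alpha_1,\dots,\alpha_{10})\in\mathbb{R}^{10}$ let $\Psi[\vec\alpha](z)=\frac{(\alpha_1+i\alpha_2)z^2+(\alpha_3+i\alpha_4)z+(\alpha_5+i\alpha_6)}{1-(\alpha_7+i\alpha_8)z-(\alpha_9+i\alpha_{10})z^2}$. For a parameter $r>0$ and $i=1,\dots,10$, $K_i[\vec\alpha]=r^{\beta_i}\,\partial_{\alpha_i}\mathcal S(\Psi[\vec\alpha])$, where $\beta_i=0$ for $i\in\{1,2,5,6\}$, $\beta_i=-1$ for $i\in\{3,4,7,8\}$, $\beta_i=-2$ for $i\in\{9,10\}$. *)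

theory Defs
  imports "HOL-Analysis.Analysis" "HOL-Computational_Algebra.Polynomial"
begin

text \<open>Parameters alpha are indexed 1..10 as a function nat => real (only indices 1..10 matter).\<close>

definition cA :: "(nat \<Rightarrow> real) \<Rightarrow> complex" where "cA a = Complex (a 1) (a 2)"
definition cB :: "(nat \<Rightarrow> real) \<Rightarrow> complex" where "cB a = Complex (a 3) (a 4)"
definition cC :: "(nat \<Rightarrow> real) \<Rightarrow> complex" where "cC a = Complex (a 5) (a 6)"
definition cD :: "(nat \<Rightarrow> real) \<Rightarrow> complex" where "cD a = Complex (a 7) (a 8)"
definition cE :: "(nat \<Rightarrow> real) \<Rightarrow> complex" where "cE a = Complex (a 9) (a 10)"

definition numer_poly :: "(nat \<Rightarrow> real) \<Rightarrow> complex poly" where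
  "numer_poly a = [:cC a, cB a, cA a:]"
definition denom_poly :: "(nat \<Rightarrow> real) \<Rightarrow> complex poly" where
  "denom_poly a = [:1, - cD a, - cE a:]"

definition sproj :: "complex \<Rightarrow> real \<times> real \<times> real" where
  "sproj w = (2 * Re w / (1 + (cmod w)\<^sup>2), 2 * Im w / (1 + (cmod w)\<^sup>2),
              ((cmod w)\<^sup>2 - 1) / (1 + (cmod w)\<^sup>2))"

text \<open>S(Psi[alpha](z)), with Psi[alpha] viewed as a map into the Riemann sphere:
  at poles (denominator zero) the value is infinity, whose image under S is the north pole.\<close>
definition SPsi :: "(nat \<Rightarrow> real) \<Rightarrow> complex \<Rightarrow> real \<times> real \<times> real" where
  "SPsi a z = (if poly (denom_poly a) z = 0 then (0, 0, 1)
               else sproj (poly (numer_poly a) z / poly (denom_poly a) z))"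

definition beta :: "nat \<Rightarrow> real" where
  "beta i = (if i \<in> {1,2,5,6} then 0 else if i \<in> {3,4,7,8} then -1 else -2)"

definition K :: "real \<Rightarrow> nat \<Rightarrow> (nat \<Rightarrow> real) \<Rightarrow> complex \<Rightarrow> real \<times> real \<times> real" where
  "K r i a z = (r powr beta i) *\<^sub>R
     vector_derivative (\<lambda>t::real. SPsi (a(i := a i + t)) z) (at 0)"

end

theory Submission
  imports Defs "HOL-Computational_Algebra.Polynomial_Factorial" "HOL-Computational_Algebra.Field_as_Ring"
begin

text \<open>Write \<open>\<Psi> = N / D\<close> and let \<open>N\<^sub>i, D\<^sub>i\<close> be the partial derivatives of \<open>N, D\<close> in
  \<open>\<alpha>\<^sub>i\<close>. At a point \<open>z\<close> off the poles, \<open>K\<^sub>i\<close> is \<open>r ^ \<beta>\<^sub>i\<close> times the differential of the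
  stereographic projection at \<open>\<Psi>(z)\<close> applied to \<open>(N\<^sub>i D - N D\<^sub>i) / D\<^sup>2\<close>, and that
  differential is injective. A vanishing combination with weights \<open>e\<^sub>i = c\<^sub>i r ^ \<beta>\<^sub>i\<close> therefore
  gives \<open>R D = N W\<close> for \<open>R = \<Sum> e\<^sub>i N\<^sub>i\<close> and \<open>W = \<Sum> e\<^sub>i D\<^sub>i\<close>, first off the finitely many
  poles and hence as polynomials. As \<open>N\<close> and \<open>D\<close> are coprime and \<open>deg R \<le> 2 = deg N\<close>, \<open>R\<close> is a
  constant multiple of \<open>N\<close>; evaluating at \<open>0\<close>, where \<open>D = 1\<close> and \<open>W = 0\<close>, kills the constant,
  so \<open>R = W = 0\<close>, i.e. all \<open>e\<^sub>i\<close> vanish.\<close>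

definition sproj_deriv :: "complex \<Rightarrow> complex \<Rightarrow> real \<times> real \<times> real" where
  "sproj_deriv w v = (let m = 1 + (cmod w)\<^sup>2; s = inner w v in
     (2 * Re v / m - 4 * Re w * s / m\<^sup>2, 2 * Im v / m - 4 * Im w * s / m\<^sup>2, 4 * s / m\<^sup>2))"

lemma has_derivative_sproj: "(sproj has_derivative sproj_deriv w) (at w)"
proof -
  have m: "1 + inner w w \<noteq> 0"
    by (smt (verit) inner_ge_zero)
  have sproj_inner: "sproj = (\<lambda>w. (2 * Re w / (1 + inner w w), 2 * Im w / (1 + inner w w),
                 1 - 2 / (1 + inner w w)))"
  proof -
    have "(s - 1) / (1 + s) = 1 - 2 / (1 + s)" if "0 \<le> s" for s :: real
      using that by (simp add: field_simps)
    then show ?thesis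
      by (simp add: fun_eq_iff sproj_def power2_norm_eq_inner)
  qed
  show ?thesis
    unfolding sproj_inner
    apply (rule derivative_eq_intros refl m bounded_linear.has_derivative[OF bounded_linear_Re]
        bounded_linear.has_derivative[OF bounded_linear_Im])+
    unfolding sproj_deriv_def Let_def power2_norm_eq_inner
    using m by (simp add: fun_eq_iff inner_commute inverse_eq_divide power2_eq_square
        diff_divide_distrib add_divide_distrib)
qed

lemma linear_sproj_deriv: "linear (sproj_deriv w)"
  using has_derivative_sproj by (rule has_derivative_linear)

lemma sproj_deriv_eq_0_iff: "sproj_deriv w v = 0 \<longleftrightarrow> v = 0"
proof
  assume 0: "sproj_deriv w v = 0"
  define m where "m = 1 + (cmod w)\<^sup>2"
  have "m > 0"
    unfolding m_def by (smt (verit) zero_le_power2)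
  with 0 have "inner w v = 0"
    by (simp add: sproj_deriv_def Let_def zero_prod_def m_def[symmetric])
  with 0 \<open>m > 0\<close> show "v = 0"
    by (simp add: sproj_deriv_def Let_def zero_prod_def m_def[symmetric] complex_eq_iff)
qed (simp add: sproj_deriv_def zero_prod_def)

lemma has_vector_derivative_affine_quotient:
  fixes n0 n1 d0 d1 :: complex
  assumes "d0 \<noteq> 0"
  shows "((\<lambda>t::real. (n0 + of_real t * n1) / (d0 + of_real t * d1)) has_vector_derivative
          (n1 * d0 - n0 * d1) / d0\<^sup>2) (at 0)"
proof -
  have "((\<lambda>x. (n0 + x * n1) / (d0 + x * d1)) has_field_derivative
          (n1 * d0 - n0 * d1) / d0\<^sup>2) (at (of_real 0))"
    by (rule derivative_eq_intros refl | use assms in \<open>simp add: power2_eq_square\<close>)+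
  from has_vector_derivative_real_field[OF this] show ?thesis by simp
qed

text \<open>Both polynomials are affine in \<open>\<alpha>\<close>; these are their partial derivatives in \<open>\<alpha>\<^sub>i\<close>.\<close>

definition numer_dir :: "nat \<Rightarrow> complex poly" where
  "numer_dir i = numer_poly (\<lambda>j. of_bool (j = i))"

definition denom_dir :: "nat \<Rightarrow> complex poly" where
  "denom_dir i = denom_poly (\<lambda>j. of_bool (j = i)) - 1"

lemma numer_poly_update:
  "numer_poly (a(i := a i + t)) = numer_poly a + smult (of_real t) (numer_dir i)"
  by (auto simp: numer_dir_def numer_poly_def cA_def cB_def cC_def complex_eq_iff)

lemma denom_poly_update:
  "denom_poly (a(i := a i + t)) = denom_poly a + smult (of_real t) (denom_dir i)"
  by (auto simp: denom_dir_def denom_poly_def cD_def cE_def one_pCons complex_eq_iff)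

lemma atLeastAtMost_1_10: "{1..10::nat} = {1,2,3,4,5,6,7,8,9,10}"
  by (auto; arith)

lemma sum_numer_dir: "(\<Sum>i=1..10. smult (of_real (e i)) (numer_dir i)) = numer_poly e"
  unfolding atLeastAtMost_1_10 by (simp add: numer_dir_def numer_poly_def cA_def cB_def cC_def complex_eq_iff)

lemma sum_denom_dir: "(\<Sum>i=1..10. smult (of_real (e i)) (denom_dir i)) = denom_poly e - 1"
  unfolding atLeastAtMost_1_10 by (simp add: denom_dir_def denom_poly_def cD_def cE_def one_pCons complex_eq_iff)

lemma K_eq_sproj_deriv:
  assumes n: "poly (numer_poly a) z = n" and d: "poly (denom_poly a) z = d" and "d \<noteq> 0"
  shows "K r i a z = r powr beta i *\<^sub>R
           sproj_deriv (n / d) ((poly (numer_dir i) z * d - n * poly (denom_dir i) z) / d\<^sup>2)"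
proof -
  define g where "g t = (n + of_real t * poly (numer_dir i) z) / (d + of_real t * poly (denom_dir i) z)"
    for t :: real
  define S where "S = {t::real. d + of_real t * poly (denom_dir i) z \<noteq> 0}"
  have "(g has_vector_derivative (poly (numer_dir i) z * d - n * poly (denom_dir i) z) / d\<^sup>2) (at 0)"
    unfolding g_def using \<open>d \<noteq> 0\<close> by (rule has_vector_derivative_affine_quotient)
  then have "((sproj \<circ> g) has_vector_derivative
      sproj_deriv (n / d) ((poly (numer_dir i) z * d - n * poly (denom_dir i) z) / d\<^sup>2)) (at 0)"
    by (rule vector_derivative_diff_chain_within)
      (use has_derivative_sproj in \<open>simp add: g_def has_derivative_at_withinI\<close>)
  moreover have "open S"
    unfolding S_def by (rule open_Collect_neq) (auto intro!: continuous_intros)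
  moreover have "0 \<in> S"
    using \<open>d \<noteq> 0\<close> by (simp add: S_def)
  moreover have "(sproj \<circ> g) t = SPsi (a(i := a i + t)) z" if "t \<in> S" for t
    using that by (simp add: S_def SPsi_def numer_poly_update denom_poly_update g_def n d)
  ultimately have "((\<lambda>t. SPsi (a(i := a i + t)) z) has_vector_derivative
      sproj_deriv (n / d) ((poly (numer_dir i) z * d - n * poly (denom_dir i) z) / d\<^sup>2)) (at 0)"
    by (rule has_vector_derivative_transform_within_open)
  then show ?thesis
    unfolding K_def by (simp add: vector_derivative_at)
qed

lemma sum_K_eq_sproj_deriv:
  fixes c :: "nat \<Rightarrow> real" and r :: real
  assumes n: "poly (numer_poly a) z = n" and d: "poly (denom_poly a) z = d" and "d \<noteq> 0"
  defines "e \<equiv> \<lambda>i. c i * r powr beta i"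
  shows "(\<Sum>i=1..10. c i *\<^sub>R K r i a z) =
           sproj_deriv (n / d) ((poly (numer_poly e) z * d - n * poly (denom_poly e - 1) z) / d\<^sup>2)"
proof -
  have "(\<Sum>i=1..10. c i *\<^sub>R K r i a z) =
      (\<Sum>i=1..10. e i *\<^sub>R sproj_deriv (n / d) ((poly (numer_dir i) z * d - n * poly (denom_dir i) z) / d\<^sup>2))"
    by (simp add: K_eq_sproj_deriv[OF assms(1-3)] e_def)
  also have "\<dots> = sproj_deriv (n / d)
      (\<Sum>i=1..10. e i *\<^sub>R ((poly (numer_dir i) z * d - n * poly (denom_dir i) z) / d\<^sup>2))"
    by (simp add: linear_sum[OF linear_sproj_deriv] linear_scale[OF linear_sproj_deriv])
  also have "(\<Sum>i=1..10. e i *\<^sub>R ((poly (numer_dir i) z * d - n * poly (denom_dir i) z) / d\<^sup>2)) =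
      (poly (\<Sum>i=1..10. smult (of_real (e i)) (numer_dir i)) z * d
        - n * poly (\<Sum>i=1..10. smult (of_real (e i)) (denom_dir i)) z) / d\<^sup>2"
    by (simp add: poly_sum scaleR_conv_of_real sum_divide_distrib sum_distrib_left
        sum_subtractf diff_divide_distrib algebra_simps)
  finally show ?thesis
    by (simp only: sum_numer_dir sum_denom_dir)
qed

lemma poly_eq_0_if_vanishes_off_roots:
  fixes p q :: "'a::{idom,ring_char_0} poly"
  assumes "\<And>z. poly q z \<noteq> 0 \<Longrightarrow> poly p z = 0" and "q \<noteq> 0"
  shows "p = 0"
proof -
  have "poly (p * q) z = 0" for z
    using assms(1)[of z] by (cases "poly q z = 0") simp_all
  then have "p * q = 0"
    using poly_all_0_iff_0[of "p * q"] by blast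
  with assms(2) show ?thesis by simp
qed

lemma coprime_cross_mult_eq_imp_zero:
  fixes N D R W :: "'a::field_gcd poly"
  assumes "coprime N D" and "N \<noteq> 0" and "degree R \<le> degree N"
    and "poly D 0 \<noteq> 0" and "poly W 0 = 0" and "R * D = N * W"
  shows "R = 0 \<and> W = 0"
proof -
  have "N dvd R * D"
    using assms(6) by simp
  then have "N dvd R"
    using coprime_dvd_mult_left_iff[OF assms(1)] by simp
  then obtain k where R: "R = N * k" ..
  with assms(2,6) have W: "W = k * D"
    by (simp add: mult.assoc)
  have "k = 0"
  proof (rule ccontr)
    assume "k \<noteq> 0"
    with assms(2,3) R have "degree k = 0"
      by (simp add: degree_mult_eq)
    moreover have "poly k 0 = 0"
      using assms(4,5) W by simp
    ultimately have "k = [:0:]"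
      by (metis degree_0_id poly_0_coeff_0)
    with \<open>k \<noteq> 0\<close> show False by simp
  qed
  with R W show ?thesis by simp
qed

lemma param_eq_0_if_numer_denom_trivial:
  assumes "numer_poly e = 0" and "denom_poly e = 1" and "i \<in> {1..10}"
  shows "e i = 0"
  using assms unfolding atLeastAtMost_1_10
  by (auto simp: numer_poly_def denom_poly_def cA_def cB_def cC_def cD_def cE_def one_pCons
      complex_eq_iff)

theorem lemma4p1:
  fixes a :: "nat \<Rightarrow> real" and r :: real
  assumes irred: "coprime (numer_poly a) (denom_poly a)"
    and lead: "cA a \<noteq> 0"
    and r: "r > 0"
  shows "\<forall>c :: nat \<Rightarrow> real.
           (\<forall>z :: complex. (\<Sum>i = 1..10. c i *\<^sub>R K r i a z) = 0)
           \<longrightarrow> (\<forall>i \<in> {1..10}. c i = 0)"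
proof (intro allI impI ballI)
  fix c :: "nat \<Rightarrow> real" and i :: nat
  assume comb: "\<forall>z. (\<Sum>i = 1..10. c i *\<^sub>R K r i a z) = 0" and i: "i \<in> {1..10}"
  define e where "e i = c i * r powr beta i" for i
  have "poly (numer_poly e * denom_poly a - numer_poly a * (denom_poly e - 1)) z = 0"
    if "poly (denom_poly a) z \<noteq> 0" for z
    using comb sum_K_eq_sproj_deriv[OF refl refl that, where c = c and r = r] that
    by (simp add: e_def[abs_def] sproj_deriv_eq_0_iff)
  then have "numer_poly e * denom_poly a - numer_poly a * (denom_poly e - 1) = 0"
    by (rule poly_eq_0_if_vanishes_off_roots[where q = "denom_poly a"]) (simp_all add: denom_poly_def)
  moreover have "numer_poly a \<noteq> 0" and "degree (numer_poly e) \<le> degree (numer_poly a)"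
    using lead by (simp_all add: numer_poly_def)
  moreover have "poly (denom_poly a) 0 \<noteq> 0" and "poly (denom_poly e - 1) 0 = 0"
    by (simp_all add: denom_poly_def)
  ultimately have "numer_poly e = 0 \<and> denom_poly e - 1 = 0"
    by (intro coprime_cross_mult_eq_imp_zero[OF irred]) simp_all
  then have "e i = 0"
    using i by (intro param_eq_0_if_numer_denom_trivial) auto
  with r show "c i = 0"
    by (simp add: e_def)
qed

end
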